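(* Let $p\in k^\times$, $A_p=k\langle x_1,x_2\rangle/(x_2x_1-px_1x_2)$, and $K$ a Hopf algebra with antipode $S$ such that $A_p$ is a right $K$-comodule algebra via $\rho(x_i)=x_1\otimes y_{1i}+x_2\otimes y_{2i}$. If $S^2=\mathrm{Id}_K$, then $$y_{21}y_{11}=p^{-1}y_{11}y_{21},\quad y_{22}y_{12}=p^{-1}y_{12}y_{22},\quad py_{21}y_{12}=p^{-1}y_{12}y_{21},\quad y_{22}y_{11}=y_{11}y_{22}.$$
   Context: Here $S$ is bijective since $S^2=\mathrm{Id}$. The homological codeterminant ${\sf D}$ of the coaction is the grouplike element with $\rho^!(x_1^*x_2^* )={\sf D}\otimes x_1^*x_2^*$, where $\rho^!(x_i^* )=\sum_s y_{is}\otimes x_s^*$ is the induced left coaction on the Ext-algebra $E=k\langle x_1^*,x_2^*\rangle/(x_2^*x_1^*+p^{-1}x_1^*x_2^*,(x_1^* )^2,(x_2^* )^2)$. *)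

theory Defs
  imports Main
begin

text \<open>A k-algebra K: a ring 'h together with a ring map iota : k -> K into the centre.
  Scalar multiplication c . x is iota c * x.\<close>
definition k_algebra :: "('k::field \<Rightarrow> 'h::ring_1) \<Rightarrow> bool" where
  "k_algebra \<iota> \<longleftrightarrow> (\<forall>a b. \<iota> (a + b) = \<iota> a + \<iota> b) \<and> (\<forall>a b. \<iota> (a * b) = \<iota> a * \<iota> b)
     \<and> \<iota> 1 = 1 \<and> (\<forall>c x. \<iota> c * x = x * \<iota> c)"

definition lin_fun :: "('k::field \<Rightarrow> 'h::ring_1) \<Rightarrow> ('h \<Rightarrow> 'k) \<Rightarrow> bool" where
  "lin_fun \<iota> \<phi> \<longleftrightarrow> (\<forall>x y. \<phi> (x + y) = \<phi> x + \<phi> y) \<and> (\<forall>c x. \<phi> (\<iota> c * x) = c * \<phi> x)"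

definition lin_map :: "('k::field \<Rightarrow> 'h::ring_1) \<Rightarrow> ('h \<Rightarrow> 'h) \<Rightarrow> bool" where
  "lin_map \<iota> f \<longleftrightarrow> (\<forall>x y. f (x + y) = f x + f y) \<and> (\<forall>c x. f (\<iota> c * x) = \<iota> c * f x)"

text \<open>Elements of K (x) K are represented by finite lists of simple tensors; two lists
  represent the same tensor iff all functionals phi (x) psi agree on them (over a field
  the functionals phi (x) psi separate the points of V (x) W). Same for K (x) K (x) K.\<close>
definition teq2 :: "('k::field \<Rightarrow> 'h::ring_1) \<Rightarrow> ('h \<times> 'h) list \<Rightarrow> ('h \<times> 'h) list \<Rightarrow> bool" where
  "teq2 \<iota> xs ys \<longleftrightarrow> (\<forall>\<phi> \<psi>. lin_fun \<iota> \<phi> \<and> lin_fun \<iota> \<psi> \<longrightarrow>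
      (\<Sum>(a, b)\<leftarrow>xs. \<phi> a * \<psi> b) = (\<Sum>(a, b)\<leftarrow>ys. \<phi> a * \<psi> b))"

definition teq3 :: "('k::field \<Rightarrow> 'h::ring_1) \<Rightarrow> ('h \<times> 'h \<times> 'h) list \<Rightarrow> ('h \<times> 'h \<times> 'h) list \<Rightarrow> bool" where
  "teq3 \<iota> xs ys \<longleftrightarrow> (\<forall>\<phi> \<psi> \<chi>. lin_fun \<iota> \<phi> \<and> lin_fun \<iota> \<psi> \<and> lin_fun \<iota> \<chi> \<longrightarrow>
      (\<Sum>(a, b, c)\<leftarrow>xs. \<phi> a * \<psi> b * \<chi> c) = (\<Sum>(a, b, c)\<leftarrow>ys. \<phi> a * \<psi> b * \<chi> c))"

definition hopf_algebra ::
  "('k::field \<Rightarrow> 'h::ring_1) \<Rightarrow> ('h \<Rightarrow> ('h \<times> 'h) list) \<Rightarrow> ('h \<Rightarrow> 'k) \<Rightarrow> ('h \<Rightarrow> 'h) \<Rightarrow> bool" where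
  "hopf_algebra \<iota> \<Delta> \<epsilon> S \<longleftrightarrow>
     k_algebra \<iota>
     \<comment> \<open>Delta is k-linear\<close>
     \<and> (\<forall>a b. teq2 \<iota> (\<Delta> (a + b)) (\<Delta> a @ \<Delta> b))
     \<and> (\<forall>c a. teq2 \<iota> (\<Delta> (\<iota> c * a)) (map (\<lambda>(x, y). (\<iota> c * x, y)) (\<Delta> a)))
     \<comment> \<open>coassociativity\<close>
     \<and> (\<forall>a. teq3 \<iota> (concat (map (\<lambda>(x, b). map (\<lambda>(c, d). (c, d, b)) (\<Delta> x)) (\<Delta> a)))
                    (concat (map (\<lambda>(x, b). map (\<lambda>(c, d). (x, c, d)) (\<Delta> b)) (\<Delta> a))))
     \<comment> \<open>counit\<close>
     \<and> lin_fun \<iota> \<epsilon>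
     \<and> (\<forall>a. (\<Sum>(x, y)\<leftarrow>\<Delta> a. \<iota> (\<epsilon> x) * y) = a \<and> (\<Sum>(x, y)\<leftarrow>\<Delta> a. x * \<iota> (\<epsilon> y)) = a)
     \<comment> \<open>Delta and eps are algebra maps (bialgebra)\<close>
     \<and> (\<forall>a b. teq2 \<iota> (\<Delta> (a * b))
                 (concat (map (\<lambda>(x, y). map (\<lambda>(x', y'). (x * x', y * y')) (\<Delta> b)) (\<Delta> a))))
     \<and> teq2 \<iota> (\<Delta> 1) [(1, 1)]
     \<and> (\<forall>a b. \<epsilon> (a * b) = \<epsilon> a * \<epsilon> b) \<and> \<epsilon> 1 = 1
     \<comment> \<open>antipode\<close>
     \<and> lin_map \<iota> S
     \<and> (\<forall>a. (\<Sum>(x, y)\<leftarrow>\<Delta> a. S x * y) = \<iota> (\<epsilon> a) \<and> (\<Sum>(x, y)\<leftarrow>\<Delta> a. x * S y) = \<iota> (\<epsilon> a))"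

text \<open>A_p (x) K, modelled via the PBW basis x1^a x2^b of A_p:
  an element is the function (a,b) |-> coefficient in K of x1^a x2^b.
  Multiplication uses x2^b x1^c = p^(b c) x1^c x2^b.\<close>
definition qp_mult :: "('k::field \<Rightarrow> 'h::ring_1) \<Rightarrow> 'k \<Rightarrow> (nat \<times> nat \<Rightarrow> 'h) \<Rightarrow> (nat \<times> nat \<Rightarrow> 'h)
    \<Rightarrow> (nat \<times> nat \<Rightarrow> 'h)" where
  "qp_mult \<iota> p F G = (\<lambda>(m, n). \<Sum>a\<le>m. \<Sum>b\<le>n. \<iota> (p ^ (b * (m - a))) * (F (a, b) * G (m - a, n - b)))"

definition rho_gen :: "(nat \<Rightarrow> nat \<Rightarrow> 'h::ring_1) \<Rightarrow> nat \<Rightarrow> (nat \<times> nat \<Rightarrow> 'h)" where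
  "rho_gen y i = (\<lambda>ab. if ab = (1, 0) then y 1 i else if ab = (0, 1) then y 2 i else 0)"

text \<open>A_p is a right K-comodule algebra via rho: rho extends to an algebra map
  A_p -> A_p (x) K (i.e. respects x2 x1 = p x1 x2), and rho is coassociative and counital,
  which (both sides being algebra maps and x1, x2 linearly independent) amounts to
  Delta(y_ij) = sum_s y_is (x) y_sj and eps(y_ij) = delta_ij.\<close>
definition comodule_algebra_Ap ::
  "('k::field \<Rightarrow> 'h::ring_1) \<Rightarrow> 'k \<Rightarrow> ('h \<Rightarrow> ('h \<times> 'h) list) \<Rightarrow> ('h \<Rightarrow> 'k)
     \<Rightarrow> (nat \<Rightarrow> nat \<Rightarrow> 'h) \<Rightarrow> bool" where
  "comodule_algebra_Ap \<iota> p \<Delta> \<epsilon> y \<longleftrightarrow>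
     qp_mult \<iota> p (rho_gen y 2) (rho_gen y 1) = (\<lambda>m. \<iota> p * qp_mult \<iota> p (rho_gen y 1) (rho_gen y 2) m)
     \<and> (\<forall>i\<in>{1,2}. \<forall>j\<in>{1,2}. teq2 \<iota> (\<Delta> (y i j)) [(y i 1, y 1 j), (y i 2, y 2 j)])
     \<and> (\<forall>i\<in>{1,2}. \<forall>j\<in>{1,2}. \<epsilon> (y i j) = (if i = j then 1 else 0))"

end

theory Submission
  imports Defs "HOL.Vector_Spaces"
begin

text \<open>Applying the antipode axioms to \<open>\<Delta>(y\<^sub>i\<^sub>j) = \<Sum>\<^sub>s y\<^sub>i\<^sub>s \<otimes> y\<^sub>s\<^sub>j\<close> shows that
  \<open>Z = (S y\<^sub>i\<^sub>j)\<close> is inverse to \<open>Y = (y\<^sub>i\<^sub>j)\<close>. Since \<open>S\<close> is an anti-homomorphism and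
  \<open>S\<^sup>2 = id\<close>, applying \<open>S\<close> to \<open>Y Z = 1\<close> shows that also \<open>Y\<^sup>T Z\<^sup>T = 1\<close>, with the products
  taken in the given order although \<open>K\<close> is not commutative.

  Put \<open>D = y\<^sub>2\<^sub>2 y\<^sub>1\<^sub>1 - p y\<^sub>2\<^sub>1 y\<^sub>1\<^sub>2\<close>. The relations expressing that \<open>\<rho>\<close> respects
  \<open>x\<^sub>2 x\<^sub>1 = p x\<^sub>1 x\<^sub>2\<close> say that \<open>Y\<^sup>T\<close> maps the rows \<open>(y\<^sub>2\<^sub>2, -p y\<^sub>2\<^sub>1)\<close> and
  \<open>(y\<^sub>1\<^sub>2, -p y\<^sub>1\<^sub>1)\<close> to \<open>(D, 0)\<close> and \<open>(0, -p D)\<close>; cancelling \<open>Y\<^sup>T\<close> identifies \<open>D Z\<close> with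
  the quantum adjugate \<open>((y\<^sub>2\<^sub>2, -p\<^sup>-\<^sup>1 y\<^sub>1\<^sub>2), (-p y\<^sub>2\<^sub>1, y\<^sub>1\<^sub>1))\<close>, and the four entries of
  \<open>D Z Y = D\<close> are the four relations.

  The tensor identities of the Hopf structure hold only after evaluation under all
  \<open>\<phi> \<otimes> \<psi>\<close>; expanding along a basis of \<open>K\<close> transfers them to arbitrary multilinear maps.\<close>

lemma k_algebra_zero: "k_algebra \<iota> \<Longrightarrow> \<iota> 0 = 0"
  unfolding k_algebra_def by (metis add_cancel_right_right)

lemma k_algebra_one: "k_algebra \<iota> \<Longrightarrow> \<iota> 1 = 1"
  unfolding k_algebra_def by blast

lemma k_algebra_add: "k_algebra \<iota> \<Longrightarrow> \<iota> (a + b) = \<iota> a + \<iota> b"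
  unfolding k_algebra_def by blast

lemma k_algebra_mult: "k_algebra \<iota> \<Longrightarrow> \<iota> (a * b) = \<iota> a * \<iota> b"
  unfolding k_algebra_def by blast

lemma k_algebra_central: "k_algebra \<iota> \<Longrightarrow> \<iota> c * x = x * \<iota> c"
  unfolding k_algebra_def by blast

lemma k_algebra_mult_scalar_right: "k_algebra \<iota> \<Longrightarrow> x * (\<iota> c * y) = \<iota> c * (x * y)"
  by (metis k_algebra_central mult.assoc)

lemma k_algebra_mult_scalars_split:
  assumes "k_algebra \<iota>"
  shows "\<iota> (c * d) * (x * y) = (\<iota> d * x) * (\<iota> c * y)"
proof -
  have "(\<iota> d * x) * (\<iota> c * y) = \<iota> d * (\<iota> c * (x * y))"
    by (simp only: mult.assoc k_algebra_mult_scalar_right[OF assms, of x c y])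
  also have "\<dots> = \<iota> (c * d) * (x * y)"
    by (simp only: mult.assoc[symmetric] k_algebra_mult[OF assms, symmetric] mult.commute[of d c])
  finally show ?thesis by (rule sym)
qed

lemma k_algebra_vector_space: "k_algebra \<iota> \<Longrightarrow> vector_space (\<lambda>c x. \<iota> c * x)"
  unfolding vector_space_def
  by (simp add: distrib_left distrib_right k_algebra_add k_algebra_mult k_algebra_one mult.assoc)

lemma lin_map_add: "lin_map \<iota> g \<Longrightarrow> g (x + y) = g x + g y"
  unfolding lin_map_def by blast

lemma lin_map_scale: "lin_map \<iota> g \<Longrightarrow> g (\<iota> c * x) = \<iota> c * g x"
  unfolding lin_map_def by blast

lemma lin_map_zero: "lin_map \<iota> g \<Longrightarrow> g 0 = 0"
  by (metis add_cancel_right_right add_0 lin_map_add)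

lemma lin_map_sum: "lin_map \<iota> g \<Longrightarrow> g (\<Sum>x\<in>A. h x) = (\<Sum>x\<in>A. g (h x))"
  by (induct A rule: infinite_finite_induct) (simp_all add: lin_map_zero lin_map_add)

lemma lin_map_sum_list: "lin_map \<iota> g \<Longrightarrow> g (\<Sum>x\<leftarrow>xs. h x) = (\<Sum>x\<leftarrow>xs. g (h x))"
  by (induct xs) (simp_all add: lin_map_zero lin_map_add)

lemma lin_fun_add: "lin_fun \<iota> \<phi> \<Longrightarrow> \<phi> (x + y) = \<phi> x + \<phi> y"
  unfolding lin_fun_def by blast

lemma lin_fun_scale: "lin_fun \<iota> \<phi> \<Longrightarrow> \<phi> (\<iota> c * x) = c * \<phi> x"
  unfolding lin_fun_def by blast

definition lin_map2 :: "('k::field \<Rightarrow> 'h::ring_1) \<Rightarrow> ('h \<Rightarrow> 'h \<Rightarrow> 'h) \<Rightarrow> bool" where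
  "lin_map2 \<iota> f \<longleftrightarrow> (\<forall>c. lin_map \<iota> (\<lambda>a. f a c)) \<and> (\<forall>a. lin_map \<iota> (f a))"

definition lin_map3 :: "('k::field \<Rightarrow> 'h::ring_1) \<Rightarrow> ('h \<Rightarrow> 'h \<Rightarrow> 'h \<Rightarrow> 'h) \<Rightarrow> bool" where
  "lin_map3 \<iota> f \<longleftrightarrow> (\<forall>c d. lin_map \<iota> (\<lambda>a. f a c d)) \<and> (\<forall>a d. lin_map \<iota> (\<lambda>c. f a c d))
     \<and> (\<forall>a c. lin_map \<iota> (f a c))"

text \<open>\<open>R v b\<close> is the coordinate of \<open>v\<close> along the basis vector \<open>b\<close>; the basis is left implicit.\<close>
definition coordinate_functionals :: "('k::field \<Rightarrow> 'h::ring_1) \<Rightarrow> ('h \<Rightarrow> 'h \<Rightarrow> 'k) \<Rightarrow> bool" where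
  "coordinate_functionals \<iota> R \<longleftrightarrow> (\<forall>b. lin_fun \<iota> (\<lambda>v. R v b)) \<and> (\<forall>v. finite {b. R v b \<noteq> 0}) \<and>
     (\<forall>v T. finite T \<longrightarrow> {b. R v b \<noteq> 0} \<subseteq> T \<longrightarrow> (\<Sum>b\<in>T. \<iota> (R v b) * b) = v)"

lemma coordinate_functionals_exist:
  fixes \<iota> :: "'k::field \<Rightarrow> 'h::ring_1"
  assumes ka: "k_algebra \<iota>"
  shows "\<exists>R. coordinate_functionals \<iota> R"
proof -
  interpret vs: vector_space "\<lambda>c x. \<iota> c * x" using k_algebra_vector_space[OF ka] .
  obtain B where indep: "vs.independent B" and spans: "UNIV \<subseteq> vs.span B"
    using vs.basis_exists by blast
  let ?R = "vs.representation B"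
  have span: "v \<in> vs.span B" for v using spans by blast
  have "lin_fun \<iota> (\<lambda>v. ?R v b)" for b
    unfolding lin_fun_def
    using vs.representation_add[OF indep span span] vs.representation_scale[OF indep span] by simp
  moreover have "(\<Sum>b\<in>T. \<iota> (?R v b) * b) = v" if "finite T" "{b. ?R v b \<noteq> 0} \<subseteq> T" for v T
  proof -
    have "(\<Sum>b\<in>T. \<iota> (?R v b) * b) = (\<Sum>b | ?R v b \<noteq> 0. \<iota> (?R v b) * b)"
      by (rule sum.mono_neutral_cong_right) (use that in \<open>auto simp: k_algebra_zero[OF ka]\<close>)
    also have "\<dots> = v" by (rule vs.sum_nonzero_representation_eq[OF indep span])
    finally show ?thesis .
  qed
  ultimately show ?thesis
    unfolding coordinate_functionals_def using vs.finite_representation by blast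
qed

lemma lin_map_expand:
  assumes R: "coordinate_functionals \<iota> R" and g: "lin_map \<iota> g"
    and T: "finite T" "{b. R v b \<noteq> 0} \<subseteq> T"
  shows "g v = (\<Sum>b\<in>T. \<iota> (R v b) * g b)"
proof -
  have "g v = g (\<Sum>b\<in>T. \<iota> (R v b) * b)" using R T unfolding coordinate_functionals_def by simp
  also have "\<dots> = (\<Sum>b\<in>T. \<iota> (R v b) * g b)" by (simp add: lin_map_sum[OF g] lin_map_scale[OF g])
  finally show ?thesis .
qed

lemma sum_list_lin_map2_expand:
  assumes ka: "k_algebra \<iota>" and R: "coordinate_functionals \<iota> R" and f: "lin_map2 \<iota> f"
    and T: "finite T" "\<forall>(a, c)\<in>set zs. {b. R a b \<noteq> 0} \<subseteq> T \<and> {b. R c b \<noteq> 0} \<subseteq> T"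
  shows "(\<Sum>(a, c)\<leftarrow>zs. f a c) = (\<Sum>b\<in>T. \<Sum>b'\<in>T. \<iota> (\<Sum>(a, c)\<leftarrow>zs. R a b * R c b') * f b b')"
  using T(2)
proof (induct zs)
  case Nil
  then show ?case by (simp add: k_algebra_zero[OF ka])
next
  case (Cons z zs)
  obtain a c where z: "z = (a, c)" by (cases z)
  have "f a c = (\<Sum>b\<in>T. \<iota> (R a b) * f b c)"
    using Cons.prems z f T(1) by (intro lin_map_expand[OF R]) (auto simp: lin_map2_def)
  also have "\<dots> = (\<Sum>b\<in>T. \<Sum>b'\<in>T. \<iota> (R a b * R c b') * f b b')"
    using Cons.prems z f T(1)
    by (simp add: lin_map_expand[OF R, of "f _" T c] lin_map2_def sum_distrib_left
        k_algebra_mult[OF ka] mult.assoc)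
  finally show ?case using Cons z by (simp add: k_algebra_add[OF ka] distrib_right sum.distrib)
qed

lemma sum_list_lin_map3_expand:
  assumes ka: "k_algebra \<iota>" and R: "coordinate_functionals \<iota> R" and f: "lin_map3 \<iota> f"
    and T: "finite T"
      "\<forall>(a, c, d)\<in>set zs. {b. R a b \<noteq> 0} \<subseteq> T \<and> {b. R c b \<noteq> 0} \<subseteq> T \<and> {b. R d b \<noteq> 0} \<subseteq> T"
  shows "(\<Sum>(a, c, d)\<leftarrow>zs. f a c d) =
    (\<Sum>b\<in>T. \<Sum>b'\<in>T. \<Sum>b''\<in>T. \<iota> (\<Sum>(a, c, d)\<leftarrow>zs. R a b * R c b' * R d b'') * f b b' b'')"
  using T(2)
proof (induct zs)
  case Nil
  then show ?case by (simp add: k_algebra_zero[OF ka])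
next
  case (Cons z zs)
  obtain a c d where z: "z = (a, c, d)" by (cases z) auto
  have "f a c d = (\<Sum>b\<in>T. \<iota> (R a b) * f b c d)"
    using Cons.prems z f T(1) by (intro lin_map_expand[OF R]) (auto simp: lin_map3_def)
  also have "\<dots> = (\<Sum>b\<in>T. \<iota> (R a b) * (\<Sum>b'\<in>T. \<iota> (R c b') * f b b' d))"
    using Cons.prems z f T(1) by (simp add: lin_map_expand[OF R, of "\<lambda>c. f _ c d" T c] lin_map3_def)
  also have "\<dots> = (\<Sum>b\<in>T. \<Sum>b'\<in>T. \<Sum>b''\<in>T. \<iota> (R a b * R c b' * R d b'') * f b b' b'')"
    using Cons.prems z f T(1)
    by (simp add: lin_map_expand[OF R, of "f _ _" T d] lin_map3_def sum_distrib_left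
        k_algebra_mult[OF ka] mult.assoc)
  finally show ?case using Cons z by (simp add: k_algebra_add[OF ka] distrib_right sum.distrib)
qed

lemma teq2_sum_list_eq:
  fixes \<iota> :: "'k::field \<Rightarrow> 'h::ring_1"
  assumes ka: "k_algebra \<iota>" and eq: "teq2 \<iota> xs ys" and f: "lin_map2 \<iota> f"
  shows "(\<Sum>(a, c)\<leftarrow>xs. f a c) = (\<Sum>(a, c)\<leftarrow>ys. f a c)"
proof -
  obtain R where R: "coordinate_functionals \<iota> R" using coordinate_functionals_exist[OF ka] by blast
  define V where "V = set (concat (map (\<lambda>(a, c). [a, c]) (xs @ ys)))"
  define T where "T = (\<Union>v\<in>V. {b. R v b \<noteq> 0})"
  have T: "finite T" using R unfolding T_def V_def coordinate_functionals_def by blast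
  have supp: "\<forall>(a, c)\<in>set zs. {b. R a b \<noteq> 0} \<subseteq> T \<and> {b. R c b \<noteq> 0} \<subseteq> T"
    if "set zs \<subseteq> set (xs @ ys)" for zs
    using that unfolding T_def V_def by fastforce
  have "lin_fun \<iota> (\<lambda>v. R v b)" for b using R unfolding coordinate_functionals_def by blast
  then have "(\<Sum>(a, c)\<leftarrow>xs. R a b * R c b') = (\<Sum>(a, c)\<leftarrow>ys. R a b * R c b')" for b b'
    using eq unfolding teq2_def by blast
  then show ?thesis
    by (simp add: sum_list_lin_map2_expand[OF ka R f T supp])
qed

lemma teq3_sum_list_eq:
  fixes \<iota> :: "'k::field \<Rightarrow> 'h::ring_1"
  assumes ka: "k_algebra \<iota>" and eq: "teq3 \<iota> xs ys" and f: "lin_map3 \<iota> f"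
  shows "(\<Sum>(a, c, d)\<leftarrow>xs. f a c d) = (\<Sum>(a, c, d)\<leftarrow>ys. f a c d)"
proof -
  obtain R where R: "coordinate_functionals \<iota> R" using coordinate_functionals_exist[OF ka] by blast
  define V where "V = set (concat (map (\<lambda>(a, c, d). [a, c, d]) (xs @ ys)))"
  define T where "T = (\<Union>v\<in>V. {b. R v b \<noteq> 0})"
  have T: "finite T" using R unfolding T_def V_def coordinate_functionals_def by blast
  have supp: "\<forall>(a, c, d)\<in>set zs. {b. R a b \<noteq> 0} \<subseteq> T \<and> {b. R c b \<noteq> 0} \<subseteq> T \<and> {b. R d b \<noteq> 0} \<subseteq> T"
    if "set zs \<subseteq> set (xs @ ys)" for zs
    using that unfolding T_def V_def by fastforce
  have "lin_fun \<iota> (\<lambda>v. R v b)" for b using R unfolding coordinate_functionals_def by blast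
  then have "(\<Sum>(a, c, d)\<leftarrow>xs. R a b * R c b' * R d b'') = (\<Sum>(a, c, d)\<leftarrow>ys. R a b * R c b' * R d b'')"
    for b b' b''
    using eq unfolding teq3_def by blast
  then show ?thesis
    by (simp add: sum_list_lin_map3_expand[OF ka R f T supp])
qed

lemma lin_map2_mult:
  assumes "k_algebra \<iota>" "lin_map \<iota> g" "lin_map \<iota> h"
  shows "lin_map2 \<iota> (\<lambda>a c. g a * h c)"
  using assms
  by (simp add: lin_map2_def lin_map_def distrib_left distrib_right k_algebra_mult_scalar_right mult.assoc)

lemma lin_map_id: "lin_map \<iota> (\<lambda>x. x)"
  by (simp add: lin_map_def)

lemma lin_map_scalar_lin_fun: "k_algebra \<iota> \<Longrightarrow> lin_fun \<iota> \<phi> \<Longrightarrow> lin_map \<iota> (\<lambda>x. \<iota> (\<phi> x))"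
  by (simp add: lin_map_def lin_fun_add lin_fun_scale k_algebra_add k_algebra_mult)

lemma sum_list_concat_map: "(\<Sum>z\<leftarrow>concat (map g xs). f z) = (\<Sum>x\<leftarrow>xs. \<Sum>z\<leftarrow>g x. f z)"
  by (induct xs) simp_all

lemma sum_list_pairs_swap:
  "(\<Sum>(a, b)\<leftarrow>xs. \<Sum>(c, d)\<leftarrow>ys. f a b c d) = (\<Sum>(c, d)\<leftarrow>ys. \<Sum>(a, b)\<leftarrow>xs. f a b c d :: 'a::comm_monoid_add)"
  by (induct xs) (simp_all add: split_def sum_list_addf)

locale hopf_structure =
  fixes \<iota> :: "'k::field \<Rightarrow> 'h::ring_1" and \<Delta> :: "'h \<Rightarrow> ('h \<times> 'h) list"
    and \<epsilon> :: "'h \<Rightarrow> 'k" and S :: "'h \<Rightarrow> 'h"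
  assumes hopf: "hopf_algebra \<iota> \<Delta> \<epsilon> S"
begin

lemma
  shows is_k_algebra: "k_algebra \<iota>"
    and coassoc: "teq3 \<iota> (concat (map (\<lambda>(x, b). map (\<lambda>(c, d). (c, d, b)) (\<Delta> x)) (\<Delta> a)))
      (concat (map (\<lambda>(x, b). map (\<lambda>(c, d). (x, c, d)) (\<Delta> b)) (\<Delta> a)))"
    and counit_lin_fun: "lin_fun \<iota> \<epsilon>"
    and counit_left: "(\<Sum>(x, y)\<leftarrow>\<Delta> a. \<iota> (\<epsilon> x) * y) = a"
    and counit_right: "(\<Sum>(x, y)\<leftarrow>\<Delta> a. x * \<iota> (\<epsilon> y)) = a"
    and comult_mult: "teq2 \<iota> (\<Delta> (a * b))
      (concat (map (\<lambda>(x, y). map (\<lambda>(x', y'). (x * x', y * y')) (\<Delta> b)) (\<Delta> a)))"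
    and comult_one: "teq2 \<iota> (\<Delta> 1) [(1, 1)]"
    and counit_mult: "\<epsilon> (a * b) = \<epsilon> a * \<epsilon> b"
    and counit_one: "\<epsilon> 1 = 1"
    and antipode_lin_map: "lin_map \<iota> S"
    and antipode_left: "(\<Sum>(x, y)\<leftarrow>\<Delta> a. S x * y) = \<iota> (\<epsilon> a)"
    and antipode_right: "(\<Sum>(x, y)\<leftarrow>\<Delta> a. x * S y) = \<iota> (\<epsilon> a)"
  using hopf unfolding hopf_algebra_def by blast+

lemma comult_sum_list_eq:
  assumes "teq2 \<iota> (\<Delta> a) xs" "lin_map2 \<iota> f"
  shows "(\<Sum>(x, y)\<leftarrow>\<Delta> a. f x y) = (\<Sum>(x, y)\<leftarrow>xs. f x y)"
  using teq2_sum_list_eq[OF is_k_algebra assms] .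

lemma comult_mult_sum_list:
  assumes "lin_map2 \<iota> f"
  shows "(\<Sum>(x, y)\<leftarrow>\<Delta> (a * b). f x y) = (\<Sum>(a1, a2)\<leftarrow>\<Delta> a. \<Sum>(b1, b2)\<leftarrow>\<Delta> b. f (a1 * b1) (a2 * b2))"
  using comult_sum_list_eq[OF comult_mult assms] by (simp add: sum_list_concat_map split_def comp_def)

lemma coassoc_sum_list:
  assumes "lin_map3 \<iota> f"
  shows "(\<Sum>(x, b)\<leftarrow>\<Delta> a. \<Sum>(c, d)\<leftarrow>\<Delta> x. f c d b) = (\<Sum>(x, b)\<leftarrow>\<Delta> a. \<Sum>(c, d)\<leftarrow>\<Delta> b. f x c d)"
  using teq3_sum_list_eq[OF is_k_algebra coassoc assms] by (simp add: sum_list_concat_map split_def comp_def)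

lemma antipode_expand_right: "S a = (\<Sum>(x, y)\<leftarrow>\<Delta> a. S x * \<iota> (\<epsilon> y))"
proof -
  have "S a = S (\<Sum>(x, y)\<leftarrow>\<Delta> a. x * \<iota> (\<epsilon> y))" by (simp only: counit_right)
  also have "\<dots> = (\<Sum>(x, y)\<leftarrow>\<Delta> a. S x * \<iota> (\<epsilon> y))"
    by (simp add: lin_map_sum_list[OF antipode_lin_map] split_def lin_map_scale[OF antipode_lin_map]
        k_algebra_central[OF is_k_algebra, symmetric])
  finally show ?thesis .
qed

lemma antipode_expand_left: "S a = (\<Sum>(x, y)\<leftarrow>\<Delta> a. \<iota> (\<epsilon> x) * S y)"
proof -
  have "S a = S (\<Sum>(x, y)\<leftarrow>\<Delta> a. \<iota> (\<epsilon> x) * y)" by (simp only: counit_left)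
  also have "\<dots> = (\<Sum>(x, y)\<leftarrow>\<Delta> a. \<iota> (\<epsilon> x) * S y)"
    by (simp add: lin_map_sum_list[OF antipode_lin_map] split_def lin_map_scale[OF antipode_lin_map])
  finally show ?thesis .
qed

lemma counit_mult_expand: "\<iota> (\<epsilon> (u * v)) = (\<Sum>(c, d)\<leftarrow>\<Delta> u. \<Sum>(c', d')\<leftarrow>\<Delta> v. c * (c' * (S d' * S d)))"
proof -
  have "(\<Sum>(c, d)\<leftarrow>\<Delta> u. \<Sum>(c', d')\<leftarrow>\<Delta> v. c * (c' * (S d' * S d)))
      = (\<Sum>(c, d)\<leftarrow>\<Delta> u. c * ((\<Sum>(c', d')\<leftarrow>\<Delta> v. c' * S d') * S d))"
    by (simp add: sum_list_const_mult[symmetric] sum_list_mult_const[symmetric] split_def mult.assoc)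
  also have "\<dots> = \<iota> (\<epsilon> v) * (\<Sum>(c, d)\<leftarrow>\<Delta> u. c * S d)"
    by (simp add: antipode_right[unfolded split_def] k_algebra_mult_scalar_right[OF is_k_algebra]
        sum_list_const_mult split_def)
  also have "\<dots> = \<iota> (\<epsilon> (u * v))"
    by (simp add: antipode_right counit_mult mult.commute[of "\<epsilon> u"] k_algebra_mult[OF is_k_algebra])
  finally show ?thesis by simp
qed

lemma antipode_mult_convolution:
  "(\<Sum>(c, d)\<leftarrow>\<Delta> u. \<Sum>(c', d')\<leftarrow>\<Delta> v. S (c * c') * (d * d')) = \<iota> (\<epsilon> (u * v))"
proof -
  have "lin_map2 \<iota> (\<lambda>x y. S x * y)"
    by (rule lin_map2_mult[OF is_k_algebra antipode_lin_map lin_map_id])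
  then show ?thesis
    using comult_mult_sum_list[of "\<lambda>x y. S x * y" u v] by (simp add: antipode_left)
qed

lemma antipode_one: "S 1 = 1"
proof -
  have "lin_map2 \<iota> (\<lambda>x y. S x * y)"
    by (rule lin_map2_mult[OF is_k_algebra antipode_lin_map lin_map_id])
  then have "(\<Sum>(x, y)\<leftarrow>\<Delta> 1. S x * y) = S 1 * 1"
    using comult_sum_list_eq[OF comult_one] by simp
  then show ?thesis by (simp add: antipode_left counit_one k_algebra_one[OF is_k_algebra])
qed

lemma antipode_mult_expand:
  "S (a * b) = (\<Sum>(x, d)\<leftarrow>\<Delta> a. \<Sum>(y, d')\<leftarrow>\<Delta> b.
      (\<Sum>(a1, c)\<leftarrow>\<Delta> x. \<Sum>(b1, c')\<leftarrow>\<Delta> y. S (a1 * b1) * (c * c')) * (S d' * S d))"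
proof -
  note ka = is_k_algebra and S_lin = antipode_lin_map
  have lin_a: "lin_map3 \<iota> (\<lambda>a1 c d. \<Sum>(b1, b2)\<leftarrow>\<Delta> b. \<Sum>(c', d')\<leftarrow>\<Delta> b2. S (a1 * b1) * (c * (c' * (S d' * S d))))"
    by (simp add: lin_map3_def lin_map_def split_def distrib_left distrib_right mult.assoc
        lin_map_add[OF S_lin] lin_map_scale[OF S_lin] k_algebra_mult_scalar_right[OF ka]
        sum_list_addf sum_list_const_mult)
  have lin_b: "lin_map3 \<iota> (\<lambda>b1 c' d'. S (a1 * b1) * (c * (c' * (S d' * S d))))" for a1 c d
    by (simp add: lin_map3_def lin_map_def distrib_left distrib_right mult.assoc
        lin_map_add[OF S_lin] lin_map_scale[OF S_lin] k_algebra_mult_scalar_right[OF ka])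
  have "S (a * b) = (\<Sum>(a1, a2)\<leftarrow>\<Delta> a. \<Sum>(b1, b2)\<leftarrow>\<Delta> b. S (a1 * b1) * \<iota> (\<epsilon> (a2 * b2)))"
    using comult_mult_sum_list[of "\<lambda>x y. S x * \<iota> (\<epsilon> y)" a b] antipode_expand_right[of "a * b"]
      lin_map2_mult[OF ka S_lin lin_map_scalar_lin_fun[OF ka counit_lin_fun]] by simp
  also have "\<dots> = (\<Sum>(a1, a2)\<leftarrow>\<Delta> a. \<Sum>(b1, b2)\<leftarrow>\<Delta> b. \<Sum>(c, d)\<leftarrow>\<Delta> a2. \<Sum>(c', d')\<leftarrow>\<Delta> b2.
      S (a1 * b1) * (c * (c' * (S d' * S d))))"
    by (simp add: counit_mult_expand sum_list_const_mult[symmetric] split_def)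
  also have "\<dots> = (\<Sum>(a1, a2)\<leftarrow>\<Delta> a. \<Sum>(c, d)\<leftarrow>\<Delta> a2. \<Sum>(b1, b2)\<leftarrow>\<Delta> b. \<Sum>(c', d')\<leftarrow>\<Delta> b2.
      S (a1 * b1) * (c * (c' * (S d' * S d))))"
    by (simp only: sum_list_pairs_swap[where ys = "\<Delta> b"])
  also have "\<dots> = (\<Sum>(x, d)\<leftarrow>\<Delta> a. \<Sum>(a1, c)\<leftarrow>\<Delta> x. \<Sum>(b1, b2)\<leftarrow>\<Delta> b. \<Sum>(c', d')\<leftarrow>\<Delta> b2.
      S (a1 * b1) * (c * (c' * (S d' * S d))))"
    using coassoc_sum_list[OF lin_a] by simp
  also have "\<dots> = (\<Sum>(x, d)\<leftarrow>\<Delta> a. \<Sum>(a1, c)\<leftarrow>\<Delta> x. \<Sum>(y, d')\<leftarrow>\<Delta> b. \<Sum>(b1, c')\<leftarrow>\<Delta> y.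
      S (a1 * b1) * (c * (c' * (S d' * S d))))"
    using coassoc_sum_list[OF lin_b] by simp
  also have "\<dots> = (\<Sum>(x, d)\<leftarrow>\<Delta> a. \<Sum>(y, d')\<leftarrow>\<Delta> b.
      (\<Sum>(a1, c)\<leftarrow>\<Delta> x. \<Sum>(b1, c')\<leftarrow>\<Delta> y. S (a1 * b1) * (c * c')) * (S d' * S d))"
    by (simp only: sum_list_pairs_swap[where ys = "\<Delta> b"]) (simp add: sum_list_mult_const[symmetric] split_def mult.assoc)
  finally show ?thesis .
qed

lemma antipode_antimult: "S (a * b) = S b * S a"
proof -
  have "S (a * b) = (\<Sum>(x, d)\<leftarrow>\<Delta> a. \<Sum>(y, d')\<leftarrow>\<Delta> b. (\<iota> (\<epsilon> y) * S d') * (\<iota> (\<epsilon> x) * S d))"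
    by (simp only: antipode_mult_expand[of a b] antipode_mult_convolution counit_mult
        k_algebra_mult_scalars_split[OF is_k_algebra])
  also have "\<dots> = S b * S a"
    by (simp add: antipode_expand_left[of a] antipode_expand_left[of b] sum_list_const_mult
        sum_list_mult_const split_def)
  finally show ?thesis .
qed

lemma comodule_comult_sum_list:
  assumes "comodule_algebra_Ap \<iota> p \<Delta> \<epsilon> y" "i \<in> {1, 2}" "j \<in> {1, 2}" "lin_map2 \<iota> f"
  shows "(\<Sum>(x, z)\<leftarrow>\<Delta> (y i j). f x z) = f (y i 1) (y 1 j) + f (y i 2) (y 2 j)"
proof -
  have "teq2 \<iota> (\<Delta> (y i j)) [(y i 1, y 1 j), (y i 2, y 2 j)]"
    using assms(1-3) unfolding comodule_algebra_Ap_def by blast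
  from comult_sum_list_eq[OF this assms(4)] show ?thesis by simp
qed

lemma comodule_counit:
  assumes "comodule_algebra_Ap \<iota> p \<Delta> \<epsilon> y" "i \<in> {1, 2}" "j \<in> {1, 2}"
  shows "\<iota> (\<epsilon> (y i j)) = (if i = j then 1 else 0)"
  using assms unfolding comodule_algebra_Ap_def
  by (auto simp: k_algebra_one[OF is_k_algebra] k_algebra_zero[OF is_k_algebra])

lemma antipode_inverse_matrix:
  assumes "comodule_algebra_Ap \<iota> p \<Delta> \<epsilon> y" "l \<in> {1, 2}" "j \<in> {1, 2}"
  shows "S (y l 1) * y 1 j + S (y l 2) * y 2 j = (if l = j then 1 else 0)"
    and "y l 1 * S (y 1 j) + y l 2 * S (y 2 j) = (if l = j then 1 else 0)"
  using antipode_left[of "y l j"] antipode_right[of "y l j"] comodule_counit[OF assms]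
    comodule_comult_sum_list[OF assms lin_map2_mult[OF is_k_algebra antipode_lin_map lin_map_id]]
    comodule_comult_sum_list[OF assms lin_map2_mult[OF is_k_algebra lin_map_id antipode_lin_map]]
  by simp_all

lemma antipode_transposed_inverse_matrix:
  assumes "comodule_algebra_Ap \<iota> p \<Delta> \<epsilon> y" "l \<in> {1, 2}" "j \<in> {1, 2}"
    and involutive: "\<And>a. S (S a) = a"
  shows "y 1 j * S (y l 1) + y 2 j * S (y l 2) = (if l = j then 1 else 0)"
proof -
  have "S (y l 1 * S (y 1 j) + y l 2 * S (y 2 j)) = S (if l = j then 1 else 0)"
    using antipode_inverse_matrix(2)[OF assms(1-3)] by simp
  then show ?thesis
    by (simp add: lin_map_add[OF antipode_lin_map] antipode_antimult involutive antipode_one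
        lin_map_zero[OF antipode_lin_map] split: if_splits)
qed

end

lemma comodule_algebra_Ap_relations:
  fixes \<iota> :: "'k::field \<Rightarrow> 'h::ring_1"
  assumes ka: "k_algebra \<iota>" and "comodule_algebra_Ap \<iota> p \<Delta> \<epsilon> y"
  shows "y 1 2 * y 1 1 = \<iota> p * (y 1 1 * y 1 2)"
    and "y 2 2 * y 2 1 = \<iota> p * (y 2 1 * y 2 2)"
    and "\<iota> p * (y 2 2 * y 1 1) + y 1 2 * y 2 1 = \<iota> p * (\<iota> p * (y 2 1 * y 1 2) + y 1 1 * y 2 2)"
proof -
  have rel: "qp_mult \<iota> p (rho_gen y 2) (rho_gen y 1) m = \<iota> p * qp_mult \<iota> p (rho_gen y 1) (rho_gen y 2) m" for m
    using assms(2) unfolding comodule_algebra_Ap_def by metis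
  show "y 1 2 * y 1 1 = \<iota> p * (y 1 1 * y 1 2)"
    using rel[of "(2, 0)"] by (simp add: qp_mult_def rho_gen_def numeral_2_eq_2 k_algebra_one[OF ka])
  show "y 2 2 * y 2 1 = \<iota> p * (y 2 1 * y 2 2)"
    using rel[of "(0, 2)"] by (simp add: qp_mult_def rho_gen_def numeral_2_eq_2 k_algebra_one[OF ka])
  show "\<iota> p * (y 2 2 * y 1 1) + y 1 2 * y 2 1 = \<iota> p * (\<iota> p * (y 2 1 * y 1 2) + y 1 1 * y 2 2)"
    using rel[of "(1, 1)"] by (simp add: qp_mult_def rho_gen_def k_algebra_one[OF ka])
qed

lemma row_mult_right_inverse_2x2:
  fixes a11 a12 a21 a22 b11 b12 b21 b22 u1 u2 :: "'a::ring_1"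
  assumes "a11 * b11 + a12 * b21 = 1" "a11 * b12 + a12 * b22 = 0"
    and "a21 * b11 + a22 * b21 = 0" "a21 * b12 + a22 * b22 = 1"
  shows "u1 = (u1 * a11 + u2 * a21) * b11 + (u1 * a12 + u2 * a22) * b21"
    and "u2 = (u1 * a11 + u2 * a21) * b12 + (u1 * a12 + u2 * a22) * b22"
proof -
  have "u1 = u1 * (a11 * b11 + a12 * b21) + u2 * (a21 * b11 + a22 * b21)"
    and "u2 = u1 * (a11 * b12 + a12 * b22) + u2 * (a21 * b12 + a22 * b22)"
    using assms by simp_all
  then show "u1 = (u1 * a11 + u2 * a21) * b11 + (u1 * a12 + u2 * a22) * b21"
    and "u2 = (u1 * a11 + u2 * a21) * b12 + (u1 * a12 + u2 * a22) * b22"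
    by (simp_all add: algebra_simps)
qed

lemma quantum_matrix_relations:
  fixes P Q :: "'a::ring_1" and y z :: "nat \<Rightarrow> nat \<Rightarrow> 'a"
  assumes QP: "Q * P = 1"
    and rel11: "y 1 2 * y 1 1 = P * (y 1 1 * y 1 2)"
    and rel22: "y 2 2 * y 2 1 = P * (y 2 1 * y 2 2)"
    and rel12: "P * (y 2 2 * y 1 1) + y 1 2 * y 2 1 = P * (P * (y 2 1 * y 1 2) + y 1 1 * y 2 2)"
    and left_inv: "\<And>l j. l \<in> {1, 2} \<Longrightarrow> j \<in> {1, 2} \<Longrightarrow>
      z l 1 * y 1 j + z l 2 * y 2 j = (if l = j then 1 else 0)"
    and transposed_inv: "\<And>l j. l \<in> {1, 2} \<Longrightarrow> j \<in> {1, 2} \<Longrightarrow>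
      y 1 j * z l 1 + y 2 j * z l 2 = (if l = j then 1 else 0)"
  shows "y 2 1 * y 1 1 = Q * (y 1 1 * y 2 1)"
    and "y 2 2 * y 1 2 = Q * (y 1 2 * y 2 2)"
    and "P * (y 2 1 * y 1 2) = Q * (y 1 2 * y 2 1)"
    and "y 2 2 * y 1 1 = y 1 1 * y 2 2"
proof -
  have cancel: "Q * (P * w) = w" for w by (simp add: mult.assoc[symmetric] QP)
  define D where "D = y 2 2 * y 1 1 - P * (y 2 1 * y 1 2)"
  have "y 1 1 * z 1 1 + y 2 1 * z 1 2 = 1" "y 1 1 * z 2 1 + y 2 1 * z 2 2 = 0"
    "y 1 2 * z 1 1 + y 2 2 * z 1 2 = 0" "y 1 2 * z 2 1 + y 2 2 * z 2 2 = 1"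
    using transposed_inv[of 1 1] transposed_inv[of 2 1] transposed_inv[of 1 2] transposed_inv[of 2 2]
    by simp_all
  note row = row_mult_right_inverse_2x2[OF this]
  have row1: "y 2 2 * y 1 1 + - (P * y 2 1) * y 1 2 = D" "y 2 2 * y 2 1 + - (P * y 2 1) * y 2 2 = 0"
    using rel22 by (simp_all add: D_def mult.assoc)
  have Dz11: "D * z 1 1 = y 2 2" and Dz21: "D * z 2 1 = - (P * y 2 1)"
    using row[where ?u1.0 = "y 2 2" and ?u2.0 = "- (P * y 2 1)"] unfolding row1 by simp_all
  have row2: "y 1 2 * y 1 1 + - (P * y 1 1) * y 1 2 = 0" "y 1 2 * y 2 1 + - (P * y 1 1) * y 2 2 = - (P * D)"
    using rel11 rel12 by (simp_all add: D_def algebra_simps)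
  have "Q * y 1 2 = Q * (- (P * D) * z 1 2)" "Q * - (P * y 1 1) = Q * (- (P * D) * z 2 2)"
    using row[where ?u1.0 = "y 1 2" and ?u2.0 = "- (P * y 1 1)"] unfolding row2 by simp_all
  then have Dz12: "D * z 1 2 = - (Q * y 1 2)" and Dz22: "D * z 2 2 = y 1 1"
    by (simp_all add: mult.assoc cancel)
  have "D * (z l 1 * y 1 j + z l 2 * y 2 j) = (if l = j then D else 0)"
    if "l \<in> {1, 2}" "j \<in> {1, 2}" for l j
    using left_inv[OF that] by simp
  then have "D * z 1 1 * y 1 1 + D * z 1 2 * y 2 1 = D" "D * z 1 1 * y 1 2 + D * z 1 2 * y 2 2 = 0"
    "D * z 2 1 * y 1 1 + D * z 2 2 * y 2 1 = 0" "D * z 2 1 * y 1 2 + D * z 2 2 * y 2 2 = D"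
    by (simp_all add: distrib_left mult.assoc)
  then have "y 2 2 * y 1 1 - Q * (y 1 2 * y 2 1) = D" "y 2 2 * y 1 2 - Q * (y 1 2 * y 2 2) = 0"
    "y 1 1 * y 2 1 - P * (y 2 1 * y 1 1) = 0" "y 1 1 * y 2 2 - P * (y 2 1 * y 1 2) = D"
    unfolding Dz11 Dz12 Dz21 Dz22 by (simp_all add: mult.assoc)
  then show "y 2 1 * y 1 1 = Q * (y 1 1 * y 2 1)"
    and "y 2 2 * y 1 2 = Q * (y 1 2 * y 2 2)"
    and "P * (y 2 1 * y 1 2) = Q * (y 1 2 * y 2 1)"
    and "y 2 2 * y 1 1 = y 1 1 * y 2 2"
    by (simp_all add: D_def cancel)
qed

theorem lemma5p3:
  fixes \<iota> :: "'k::field \<Rightarrow> 'h::ring_1"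
    and p :: 'k
    and \<Delta> :: "'h \<Rightarrow> ('h \<times> 'h) list" and \<epsilon> :: "'h \<Rightarrow> 'k" and S :: "'h \<Rightarrow> 'h"
    and y :: "nat \<Rightarrow> nat \<Rightarrow> 'h"
  assumes "p \<noteq> 0"
    and "hopf_algebra \<iota> \<Delta> \<epsilon> S"
    and "comodule_algebra_Ap \<iota> p \<Delta> \<epsilon> y"
    and "\<forall>a. S (S a) = a"
  shows "y 2 1 * y 1 1 = \<iota> (inverse p) * (y 1 1 * y 2 1)
    \<and> y 2 2 * y 1 2 = \<iota> (inverse p) * (y 1 2 * y 2 2)
    \<and> \<iota> p * (y 2 1 * y 1 2) = \<iota> (inverse p) * (y 1 2 * y 2 1)
    \<and> y 2 2 * y 1 1 = y 1 1 * y 2 2"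
proof -
  interpret hopf_structure \<iota> \<Delta> \<epsilon> S by (rule hopf_structure.intro) (rule assms(2))
  have inverse: "\<iota> (inverse p) * \<iota> p = 1"
    using assms(1) by (simp add: k_algebra_mult[OF is_k_algebra, symmetric] k_algebra_one[OF is_k_algebra])
  have involutive: "\<And>a. S (S a) = a" using assms(4) by blast
  show ?thesis
    using quantum_matrix_relations[OF inverse comodule_algebra_Ap_relations[OF is_k_algebra assms(3)]
        antipode_inverse_matrix(1)[OF assms(3)] antipode_transposed_inverse_matrix[OF assms(3) _ _ involutive]]
    by blast
qed

end
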